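(* Let $\alpha\in(0,1)$, $\psi(s)=s^{-\alpha}$ for $s>0$, $\psi(0)=0$, and $\Psi(s):=\frac{1}{1-\alpha}s^{1-\alpha}$. Let $\phi:[0,\infty)\to\mathbb{R}$ be a solution of $\ddot\phi(t)=-2\dot\phi(t)\psi(|\phi(t)|)$ with $\phi(0)>0$ and $\dot\phi(0)\in\mathbb{R}$. Then the following are equivalent: (1) there exists a time $t_0<\infty$ such that $\phi(t_0)=\dot\phi(t_0)=0$; (2) the initial data satisfy $\dot\phi(0)=-2\Psi(\phi(0))$.
   Context: This equation describes two particles $x_1,x_2$ on a line ($d=1$) governed by the Cucker–Smale system $\dot x_i=v_i$, $\dot v_i=\frac12\sum_{k=1}^2(v_k-v_i)\psi(|x_k-x_i|)$, normalized so that $x_1\equiv -x_2$, $v_1\equiv -v_2$, with $\phi=x_2-x_1$. A solution is understood in the piecewise weak sense: $\phi\in C^1([0,\infty))$, and on every compact subinterval of an interval between consecutive zeros (collision times) of $\phi$, $\phi$ belongs to $W^{2,1}$ and satisfies the equation weakly; once $\phi$ and $\dot\phi$ vanish simultaneously the particles are stuck and $\phi\equiv 0$ afterwards. *)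

theory Defs
  imports "HOL-Analysis.Analysis"
begin

definition psi :: "real \<Rightarrow> real \<Rightarrow> real" where
  "psi \<alpha> s = (if s > 0 then s powr (-\<alpha>) else 0)"

definition Psi :: "real \<Rightarrow> real \<Rightarrow> real" where
  "Psi \<alpha> s = s powr (1 - \<alpha>) / (1 - \<alpha>)"

text \<open>Piecewise weak solution of  phi'' = -2 phi' psi(|phi|)  on [0,inf),
  with dphi the derivative of phi:
  (i) phi is C^1 on [0,inf) with derivative dphi;
  (ii) on every compact interval [s,t] in [0,inf) free of zeros of phi
       (i.e. a compact subinterval of an interval between consecutive collision times),
       dphi is absolutely continuous with dphi'' = RHS, i.e.
       dphi t - dphi s = integral over [s,t] of -2 dphi psi(|phi|);
  (iii) once phi and dphi vanish simultaneously, phi stays 0.\<close>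
definition is_solution :: "real \<Rightarrow> (real \<Rightarrow> real) \<Rightarrow> (real \<Rightarrow> real) \<Rightarrow> bool" where
  "is_solution \<alpha> \<phi> d\<phi> \<longleftrightarrow>
     (\<forall>t\<ge>0. (\<phi> has_real_derivative d\<phi> t) (at t within {0..})) \<and>
     continuous_on {0..} d\<phi> \<and>
     (\<forall>s t. 0 \<le> s \<and> s \<le> t \<and> (\<forall>r\<in>{s..t}. \<phi> r \<noteq> 0) \<longrightarrow>
        ((\<lambda>r. -2 * d\<phi> r * psi \<alpha> \<bar>\<phi> r\<bar>) has_integral (d\<phi> t - d\<phi> s)) {s..t}) \<and>
     (\<forall>t\<ge>0. \<phi> t = 0 \<and> d\<phi> t = 0 \<longrightarrow> (\<forall>s\<ge>t. \<phi> s = 0))"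

end

theory Submission
  imports Defs
begin

text \<open>
  Since \<open>(2 \<Psi>(\<phi>))' = 2 \<phi>' \<psi>(\<phi>)\<close>, the quantity
  \<open>E = \<phi>' + 2 sgn(\<phi>) \<Psi>(|\<phi>|)\<close> is constant on every interval free of collisions. It is also
  continuous, and at a collision with \<open>\<phi>' \<noteq> 0\<close> the particles separate immediately, so
  \<open>E\<close> is conserved up to the first time the particles stick, where \<open>E = 0\<close>. Hence sticking
  forces \<open>E(0) = 0\<close>, which is (2). Conversely, if \<open>E(0) = 0\<close> and the particles never stuck together,
  \<open>\<phi>\<close> would stay positive with \<open>\<phi>' = -2\<Psi>(\<phi>)\<close>, i.e. \<open>(\<phi>\<^sup>\<alpha>)' = -2\<alpha>/(1-\<alpha>)\<close>, driving
  \<open>\<phi>\<^sup>\<alpha>\<close> negative in finite time.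
\<close>

lemma Psi_energy_conserved:
  fixes g g' :: "real \<Rightarrow> real"
  assumes "s \<le> t" "\<alpha> < 1"
    and pos: "\<And>r. r \<in> {s..t} \<Longrightarrow> g r > 0"
    and deriv: "\<And>r. r \<in> {s..t} \<Longrightarrow> (g has_real_derivative g' r) (at r within {s..t})"
    and eq: "((\<lambda>r. -2 * g' r * g r powr (-\<alpha>)) has_integral (g' t - g' s)) {s..t}"
  shows "g' t + 2 * Psi \<alpha> (g t) = g' s + 2 * Psi \<alpha> (g s)"
proof -
  have "((\<lambda>r. 2 * Psi \<alpha> (g r)) has_real_derivative 2 * g' r * g r powr (-\<alpha>)) (at r within {s..t})"
    if r: "r \<in> {s..t}" for r
  proof -
    have "((\<lambda>r. 2 * (g r powr (1 - \<alpha>) / (1 - \<alpha>))) has_real_derivative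
        2 * ((1 - \<alpha>) * g r powr (1 - \<alpha> - 1) * g' r / (1 - \<alpha>))) (at r within {s..t})"
      by (auto intro!: derivative_eq_intros deriv r pos[OF r])
    moreover have "2 * ((1 - \<alpha>) * g r powr (1 - \<alpha> - 1) * g' r / (1 - \<alpha>)) = 2 * g' r * g r powr (-\<alpha>)"
      using \<open>\<alpha> < 1\<close> by (simp add: field_simps)
    ultimately show ?thesis unfolding Psi_def by (simp add: mult.assoc)
  qed
  then have "((\<lambda>r. 2 * g' r * g r powr (-\<alpha>)) has_integral 2 * Psi \<alpha> (g t) - 2 * Psi \<alpha> (g s)) {s..t}"
    using \<open>s \<le> t\<close> by (intro fundamental_theorem_of_calculus)
      (auto simp: has_real_derivative_iff_has_vector_derivative)
  from has_integral_add[OF eq this]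
  have "((\<lambda>r. 0) has_integral (g' t - g' s) + (2 * Psi \<alpha> (g t) - 2 * Psi \<alpha> (g s))) {s..t}"
    by simp
  then show ?thesis
    using has_integral_0 has_integral_unique by fastforce
qed

lemma continuous_nonvanishing_pos:
  fixes g :: "real \<Rightarrow> real"
  assumes "continuous_on {s..t} g" "\<And>r. r \<in> {s..t} \<Longrightarrow> g r \<noteq> 0" "g s > 0" "r \<in> {s..t}"
  shows "g r > 0"
proof (rule ccontr)
  assume "\<not> g r > 0"
  moreover have "continuous_on {s..r} g"
    using assms(1) by (rule continuous_on_subset) (use assms(4) in auto)
  ultimately obtain x where "s \<le> x" "x \<le> r" "g x = 0"
    using IVT2'[of g r 0 s] assms(3,4) by fastforce
  with assms(2,4) show False by auto
qed

lemma right_locally_constant_imp_eq: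
  fixes f :: "real \<Rightarrow> 'a::t1_space"
  assumes "a \<le> b" and cont: "continuous_on {a..b} f"
    and loc: "\<And>u. u \<in> {a..<b} \<Longrightarrow> \<exists>\<delta>>0. \<forall>t\<in>{u..u+\<delta>}. f t = f u"
  shows "f b = f a"
proof (rule ccontr)
  assume "f b \<noteq> f a"
  define B where "B = {t \<in> {a..b}. f t \<noteq> f a}"
  define u where "u = Inf B"
  have "b \<in> B" using \<open>f b \<noteq> f a\<close> \<open>a \<le> b\<close> by (simp add: B_def)
  then have "B \<noteq> {}" by blast
  have "bdd_below B" unfolding B_def by (rule bdd_belowI[of _ a]) simp
  have lower: "u \<le> x" if "x \<in> B" for x
    unfolding u_def using that \<open>bdd_below B\<close> by (rule cInf_lower)
  have "u \<le> b" using lower[OF \<open>b \<in> B\<close>] .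
  have "a \<le> u"
    unfolding u_def by (rule cInf_greatest[OF \<open>B \<noteq> {}\<close>]) (simp add: B_def)
  have before: "f x = f a" if "x \<in> {a..<u}" for x
  proof (rule ccontr)
    assume "f x \<noteq> f a"
    with that \<open>u \<le> b\<close> have "x \<in> B" by (simp add: B_def)
    with lower[of x] that show False by simp
  qed
  have fu: "f u = f a"
  proof (cases "a < u")
    case True
    then have closure: "closure {a..<u} = {a..u}" by simp
    have cont_u: "continuous_on (closure {a..<u}) f"
      unfolding closure using cont by (rule continuous_on_subset) (simp add: \<open>u \<le> b\<close>)
    have "u \<in> closure {a..<u}"
      unfolding closure using \<open>a \<le> u\<close> by simp
    then show ?thesis
      using cont_u before by (blast intro: continuous_constant_on_closure)
  qed (use \<open>a \<le> u\<close> in simp)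
  with \<open>f b \<noteq> f a\<close> have "u \<noteq> b" by auto
  with \<open>a \<le> u\<close> \<open>u \<le> b\<close> have "u \<in> {a..<b}" by simp
  then obtain \<delta> where "\<delta> > 0" and \<delta>: "\<And>t. t \<in> {u..u+\<delta>} \<Longrightarrow> f t = f u"
    using loc by blast
  have "u + \<delta> \<le> x" if "x \<in> B" for x
  proof (rule ccontr)
    assume "\<not> u + \<delta> \<le> x"
    with lower[OF that] have "f x = f u" by (intro \<delta>) simp
    with fu that show False by (simp add: B_def)
  qed
  then have "u + \<delta> \<le> Inf B"
    by (rule cInf_greatest[OF \<open>B \<noteq> {}\<close>])
  with \<open>\<delta> > 0\<close> show False by (simp add: u_def)
qed

definition signed_Psi :: "real \<Rightarrow> real \<Rightarrow> real" where
  "signed_Psi \<alpha> x = (if x \<le> 0 then - Psi \<alpha> (- x) else Psi \<alpha> x)"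

lemma signed_Psi_0 [simp]: "signed_Psi \<alpha> 0 = 0"
  by (simp add: signed_Psi_def Psi_def)

lemma continuous_on_signed_Psi:
  assumes "\<alpha> < 1"
  shows "continuous_on UNIV (signed_Psi \<alpha>)"
proof -
  have "continuous_on UNIV
      (\<lambda>x. if x \<le> 0 then - ((- x) powr (1 - \<alpha>) / (1 - \<alpha>)) else x powr (1 - \<alpha>) / (1 - \<alpha>))"
  proof (rule continuous_on_cases_le)
    show "continuous_on {x \<in> UNIV. x \<le> 0} (\<lambda>x. - ((- x) powr (1 - \<alpha>) / (1 - \<alpha>)))"
      using assms by (intro continuous_on_minus continuous_on_divide continuous_on_powr'
          continuous_on_id continuous_on_const) auto
    show "continuous_on {x \<in> UNIV. 0 \<le> x} (\<lambda>x. x powr (1 - \<alpha>) / (1 - \<alpha>))"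
      using assms by (intro continuous_on_divide continuous_on_powr' continuous_on_id continuous_on_const) auto
  qed (auto intro: continuous_on_id)
  then show ?thesis
    unfolding signed_Psi_def Psi_def .
qed

lemma solution_has_derivative:
  "is_solution \<alpha> \<phi> d\<phi> \<Longrightarrow> t \<ge> 0 \<Longrightarrow> (\<phi> has_real_derivative d\<phi> t) (at t within {0..})"
  unfolding is_solution_def by blast

lemma solution_continuous: "is_solution \<alpha> \<phi> d\<phi> \<Longrightarrow> continuous_on {0..} \<phi>"
  unfolding continuous_on_eq_continuous_within
  by (blast intro: DERIV_continuous solution_has_derivative)

lemma solution_derivative_continuous: "is_solution \<alpha> \<phi> d\<phi> \<Longrightarrow> continuous_on {0..} d\<phi>"
  unfolding is_solution_def by blast

lemma solution_has_integral:
  "is_solution \<alpha> \<phi> d\<phi> \<Longrightarrow> 0 \<le> s \<Longrightarrow> s \<le> t \<Longrightarrow> (\<And>r. r \<in> {s..t} \<Longrightarrow> \<phi> r \<noteq> 0) \<Longrightarrow>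
    ((\<lambda>r. -2 * d\<phi> r * psi \<alpha> \<bar>\<phi> r\<bar>) has_integral (d\<phi> t - d\<phi> s)) {s..t}"
  unfolding is_solution_def by blast

definition energy :: "real \<Rightarrow> (real \<Rightarrow> real) \<Rightarrow> (real \<Rightarrow> real) \<Rightarrow> real \<Rightarrow> real" where
  "energy \<alpha> \<phi> d\<phi> t = d\<phi> t + 2 * signed_Psi \<alpha> (\<phi> t)"

lemma continuous_on_energy:
  assumes "is_solution \<alpha> \<phi> d\<phi>" "\<alpha> < 1"
  shows "continuous_on {0..} (energy \<alpha> \<phi> d\<phi>)"
  unfolding energy_def
  using solution_derivative_continuous[OF assms(1)]
    continuous_on_compose2[OF continuous_on_signed_Psi[OF assms(2)] solution_continuous[OF assms(1)]]
  by (intro continuous_intros) auto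

lemma energy_const_without_collision:
  assumes sol: "is_solution \<alpha> \<phi> d\<phi>" and "\<alpha> < 1" "0 \<le> s" "s \<le> t"
    and nz: "\<And>r. r \<in> {s..t} \<Longrightarrow> \<phi> r \<noteq> 0"
  shows "energy \<alpha> \<phi> d\<phi> t = energy \<alpha> \<phi> d\<phi> s"
proof -
  have deriv: "(\<phi> has_real_derivative d\<phi> r) (at r within {s..t})" if "r \<in> {s..t}" for r
    using that \<open>0 \<le> s\<close> by (auto intro: DERIV_subset[OF solution_has_derivative[OF sol]])
  have cont: "continuous_on {s..t} \<phi>"
    using solution_continuous[OF sol] by (rule continuous_on_subset) (use \<open>0 \<le> s\<close> in auto)
  note eq = solution_has_integral[OF sol \<open>0 \<le> s\<close> \<open>s \<le> t\<close> nz]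
  show ?thesis
  proof (cases "\<phi> s > 0")
    case True
    note pos = continuous_nonvanishing_pos[OF cont nz True]
    have "((\<lambda>r. -2 * d\<phi> r * \<phi> r powr (-\<alpha>)) has_integral (d\<phi> t - d\<phi> s)) {s..t}"
      by (rule has_integral_eq[OF _ eq]) (use pos in \<open>force simp: psi_def\<close>)
    from Psi_energy_conserved[OF \<open>s \<le> t\<close> \<open>\<alpha> < 1\<close> pos deriv this] show ?thesis
      using pos[of s] pos[of t] \<open>s \<le> t\<close> by (simp add: energy_def signed_Psi_def)
  next
    case False
    then have "- \<phi> s > 0" using nz[of s] \<open>s \<le> t\<close> by force
    have neg: "- \<phi> r > 0" if "r \<in> {s..t}" for r
      using continuous_nonvanishing_pos[of s t "\<lambda>r. - \<phi> r"] continuous_on_minus[OF cont] nz that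
        \<open>- \<phi> s > 0\<close> by auto
    have "((\<lambda>r. -2 * (- d\<phi> r) * (- \<phi> r) powr (-\<alpha>)) has_integral - (d\<phi> t - d\<phi> s)) {s..t}"
      by (rule has_integral_eq[OF _ has_integral_neg[OF eq]]) (use neg in \<open>force simp: psi_def\<close>)
    then have eq_neg: "((\<lambda>r. -2 * (- d\<phi> r) * (- \<phi> r) powr (-\<alpha>)) has_integral (- d\<phi> t) - (- d\<phi> s)) {s..t}"
      by simp
    have "((\<lambda>r. - \<phi> r) has_real_derivative - d\<phi> r) (at r within {s..t})" if "r \<in> {s..t}" for r
      using deriv[OF that] by (rule DERIV_minus)
    from Psi_energy_conserved[OF \<open>s \<le> t\<close> \<open>\<alpha> < 1\<close> neg this eq_neg] show ?thesis
      using neg[of s] neg[of t] \<open>s \<le> t\<close> by (simp add: energy_def signed_Psi_def)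
  qed
qed

lemma solution_nonzero_right:
  assumes sol: "is_solution \<alpha> \<phi> d\<phi>" and "0 \<le> u" and not_stuck: "\<phi> u \<noteq> 0 \<or> d\<phi> u \<noteq> 0"
  obtains \<delta> where "\<delta> > 0" "\<And>r. r \<in> {u<..u+\<delta>} \<Longrightarrow> \<phi> r \<noteq> 0"
proof -
  note deriv = solution_has_derivative[OF sol \<open>0 \<le> u\<close>]
  have "\<exists>\<delta>>0. \<forall>h>0. h < \<delta> \<longrightarrow> \<phi> (u + h) \<noteq> 0"
  proof (cases "\<phi> u = 0")
    case True
    with not_stuck consider "d\<phi> u > 0" | "d\<phi> u < 0" by linarith
    then show ?thesis
    proof cases
      case 1
      from has_real_derivative_pos_inc_right[OF deriv 1] True \<open>0 \<le> u\<close> show ?thesis by force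
    next
      case 2
      from has_real_derivative_neg_dec_right[OF deriv 2] True \<open>0 \<le> u\<close> show ?thesis by force
    qed
  next
    case False
    then obtain \<delta> where "\<delta> > 0" and \<delta>: "\<And>r. r \<in> {0..} \<Longrightarrow> dist r u < \<delta> \<Longrightarrow> dist (\<phi> r) (\<phi> u) < \<bar>\<phi> u\<bar>"
      using solution_continuous[OF sol] \<open>0 \<le> u\<close> unfolding continuous_on_iff
      by (metis atLeast_iff zero_less_abs_iff)
    show ?thesis
    proof (intro exI[of _ \<delta>] conjI allI impI \<open>\<delta> > 0\<close>)
      fix h :: real assume "0 < h" "h < \<delta>"
      then have "\<bar>\<phi> (u + h) - \<phi> u\<bar> < \<bar>\<phi> u\<bar>"
        using \<delta>[of "u + h"] \<open>0 \<le> u\<close> by (simp add: dist_real_def)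
      then show "\<phi> (u + h) \<noteq> 0" by auto
    qed
  qed
  then obtain \<delta> where "\<delta> > 0" and \<delta>: "\<And>h. 0 < h \<Longrightarrow> h < \<delta> \<Longrightarrow> \<phi> (u + h) \<noteq> 0"
    by blast
  show ?thesis
  proof (rule that[of "\<delta> / 2"])
    show "\<delta> / 2 > 0" using \<open>\<delta> > 0\<close> by simp
    fix r assume "r \<in> {u<..u + \<delta> / 2}"
    then show "\<phi> r \<noteq> 0" using \<delta>[of "r - u"] \<open>\<delta> > 0\<close> by auto
  qed
qed

lemma energy_right_locally_constant:
  assumes sol: "is_solution \<alpha> \<phi> d\<phi>" and "\<alpha> < 1" "0 \<le> u" "\<phi> u \<noteq> 0 \<or> d\<phi> u \<noteq> 0"
  shows "\<exists>\<delta>>0. \<forall>t\<in>{u..u+\<delta>}. energy \<alpha> \<phi> d\<phi> t = energy \<alpha> \<phi> d\<phi> u"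
proof -
  obtain \<delta> where "\<delta> > 0" and nz: "\<And>r. r \<in> {u<..u+\<delta>} \<Longrightarrow> \<phi> r \<noteq> 0"
    using solution_nonzero_right[OF sol \<open>0 \<le> u\<close> assms(4)] by blast
  let ?E = "energy \<alpha> \<phi> d\<phi>"
  have right: "?E t = ?E (u + \<delta>)" if "t \<in> {u<..u+\<delta>}" for t
    using that \<open>0 \<le> u\<close> nz by (intro energy_const_without_collision[OF sol \<open>\<alpha> < 1\<close>, symmetric]) auto
  have "continuous_on (closure {u<..u+\<delta>}) ?E"
    using \<open>\<delta> > 0\<close> \<open>0 \<le> u\<close> by (auto intro: continuous_on_subset[OF continuous_on_energy[OF sol \<open>\<alpha> < 1\<close>]])
  moreover have "u \<in> closure {u<..u+\<delta>}"
    using \<open>\<delta> > 0\<close> by simp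
  ultimately have "?E u = ?E (u + \<delta>)"
    using continuous_constant_on_closure[of "{u<..u+\<delta>}" ?E "?E (u + \<delta>)" u] right by blast
  then show ?thesis
    using \<open>\<delta> > 0\<close> right by (intro exI[of _ \<delta>]) (metis atLeastAtMost_iff greaterThanAtMost_iff order_le_less)
qed

lemma energy_conserved_until_stuck:
  assumes sol: "is_solution \<alpha> \<phi> d\<phi>" and "\<alpha> < 1" "0 \<le> T"
    and not_stuck: "\<And>u. u \<in> {0..<T} \<Longrightarrow> \<phi> u \<noteq> 0 \<or> d\<phi> u \<noteq> 0"
  shows "energy \<alpha> \<phi> d\<phi> T = energy \<alpha> \<phi> d\<phi> 0"
  using \<open>0 \<le> T\<close> continuous_on_subset[OF continuous_on_energy[OF sol \<open>\<alpha> < 1\<close>]]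
  by (rule right_locally_constant_imp_eq)
    (auto intro!: energy_right_locally_constant[OF sol \<open>\<alpha> < 1\<close>] not_stuck)

lemma first_stuck_time:
  assumes sol: "is_solution \<alpha> \<phi> d\<phi>" and "t \<ge> 0" "\<phi> t = 0" "d\<phi> t = 0"
  obtains t0 where "t0 \<ge> 0" "\<phi> t0 = 0" "d\<phi> t0 = 0" "\<And>u. u \<in> {0..<t0} \<Longrightarrow> \<phi> u \<noteq> 0 \<or> d\<phi> u \<noteq> 0"
proof -
  define S where "S = {u \<in> {0..}. \<phi> u = 0} \<inter> {u \<in> {0..}. d\<phi> u = 0}"
  have "closed S"
    unfolding S_def using solution_continuous[OF sol] solution_derivative_continuous[OF sol]
    by (intro closed_Int continuous_closed_preimage_constant) auto
  moreover have "t \<in> S" "bdd_below S"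
    using assms by (auto simp: S_def intro: bdd_belowI[of _ 0])
  ultimately have "Inf S \<in> S" "\<And>u. u \<in> S \<Longrightarrow> Inf S \<le> u"
    by (auto intro: closed_contains_Inf cInf_lower)
  then show ?thesis
    by (intro that[of "Inf S"]) (force simp: S_def)+
qed

lemma no_positive_solution_of_critical_flow:
  fixes \<phi> :: "real \<Rightarrow> real"
  assumes "0 < \<alpha>" "\<alpha> < 1"
    and pos: "\<And>t. t \<ge> 0 \<Longrightarrow> \<phi> t > 0"
    and deriv: "\<And>t. t \<ge> 0 \<Longrightarrow> (\<phi> has_real_derivative -2 * Psi \<alpha> (\<phi> t)) (at t within {0..})"
  shows False
proof -
  define k where "k = 2 * \<alpha> / (1 - \<alpha>)"
  have "k > 0" using assms(1,2) by (simp add: k_def)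
  have linear: "((\<lambda>t. \<phi> t powr \<alpha>) has_real_derivative -k) (at t within {0..})" if "t \<ge> 0" for t
  proof -
    have "((\<lambda>t. \<phi> t powr \<alpha>) has_real_derivative \<alpha> * \<phi> t powr (\<alpha> - 1) * (-2 * Psi \<alpha> (\<phi> t)))
        (at t within {0..})"
      by (auto intro!: derivative_eq_intros deriv pos that)
    moreover have "\<phi> t powr (\<alpha> - 1) * \<phi> t powr (1 - \<alpha>) = 1"
      using pos[OF that] by (simp flip: powr_add)
    then have "\<alpha> * \<phi> t powr (\<alpha> - 1) * (-2 * Psi \<alpha> (\<phi> t)) = -k"
      using \<open>\<alpha> < 1\<close> unfolding k_def Psi_def by (simp add: field_simps)
    ultimately show ?thesis by simp
  qed
  define T where "T = \<phi> 0 powr \<alpha> / k + 1"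
  have "T \<ge> 0" using \<open>k > 0\<close> by (simp add: T_def)
  have "\<exists>x\<in>{0..T}. \<phi> T powr \<alpha> - \<phi> 0 powr \<alpha> = -k * (T - 0)"
  proof (rule mvt_very_simple[OF \<open>T \<ge> 0\<close>, of _ "\<lambda>_. (*) (-k)"])
    fix x assume "0 \<le> x" "x \<le> T"
    then have "((\<lambda>t. \<phi> t powr \<alpha>) has_real_derivative -k) (at x within {0..T})"
      by (auto intro: DERIV_subset[OF linear])
    then show "((\<lambda>t. \<phi> t powr \<alpha>) has_derivative (*) (-k)) (at x within {0..T})"
      by (simp add: has_field_derivative_def)
  qed
  then have "\<phi> T powr \<alpha> = -k"
    using \<open>k > 0\<close> by (simp add: T_def field_simps)
  with \<open>k > 0\<close> show False
    using powr_ge_zero[of "\<phi> T" \<alpha>] by simp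
qed

lemma stuck_imp_initial_energy_zero:
  assumes sol: "is_solution \<alpha> \<phi> d\<phi>" and "\<alpha> < 1" "t \<ge> 0" "\<phi> t = 0" "d\<phi> t = 0"
  shows "energy \<alpha> \<phi> d\<phi> 0 = 0"
proof -
  obtain t0 where "t0 \<ge> 0" "\<phi> t0 = 0" "d\<phi> t0 = 0"
    and not_stuck: "\<And>u. u \<in> {0..<t0} \<Longrightarrow> \<phi> u \<noteq> 0 \<or> d\<phi> u \<noteq> 0"
    using first_stuck_time[OF sol \<open>t \<ge> 0\<close> \<open>\<phi> t = 0\<close> \<open>d\<phi> t = 0\<close>] by blast
  have "energy \<alpha> \<phi> d\<phi> t0 = energy \<alpha> \<phi> d\<phi> 0"
    using sol \<open>\<alpha> < 1\<close> \<open>t0 \<ge> 0\<close> not_stuck by (rule energy_conserved_until_stuck)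
  with \<open>\<phi> t0 = 0\<close> \<open>d\<phi> t0 = 0\<close> show ?thesis
    by (simp add: energy_def)
qed

lemma initial_energy_zero_imp_stuck:
  assumes "0 < \<alpha>" "\<alpha> < 1" and sol: "is_solution \<alpha> \<phi> d\<phi>"
    and "\<phi> 0 > 0" "energy \<alpha> \<phi> d\<phi> 0 = 0"
  shows "\<exists>t0\<ge>0. \<phi> t0 = 0 \<and> d\<phi> t0 = 0"
proof (rule ccontr)
  assume never_stuck: "\<not> ?thesis"
  have E: "energy \<alpha> \<phi> d\<phi> t = 0" if "t \<ge> 0" for t
    using sol \<open>\<alpha> < 1\<close> that \<open>energy \<alpha> \<phi> d\<phi> 0 = 0\<close>
    by (subst energy_conserved_until_stuck) (use never_stuck in auto)
  have nonzero: "\<phi> t \<noteq> 0" if "t \<ge> 0" for t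
    using E[OF that] never_stuck that by (auto simp: energy_def)
  have pos: "\<phi> t > 0" if "t \<ge> 0" for t
  proof (rule continuous_nonvanishing_pos[of 0 t \<phi>])
    show "continuous_on {0..t} \<phi>"
      using solution_continuous[OF sol] by (rule continuous_on_subset) auto
    show "\<phi> r \<noteq> 0" if "r \<in> {0..t}" for r
      using nonzero that by simp
  qed (use \<open>\<phi> 0 > 0\<close> that in auto)
  have "d\<phi> t = -2 * Psi \<alpha> (\<phi> t)" if "t \<ge> 0" for t
    using E[OF that] pos[OF that] by (simp add: energy_def signed_Psi_def)
  with solution_has_derivative[OF sol] show False
    by (intro no_positive_solution_of_critical_flow[OF \<open>0 < \<alpha>\<close> \<open>\<alpha> < 1\<close> pos]) auto
qed

theorem proposition3p1:
  fixes \<alpha> :: real and \<phi> d\<phi> :: "real \<Rightarrow> real"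
  assumes "0 < \<alpha>" and "\<alpha> < 1"
    and "is_solution \<alpha> \<phi> d\<phi>"
    and "\<phi> 0 > 0"
  shows "(\<exists>t0\<ge>0. \<phi> t0 = 0 \<and> d\<phi> t0 = 0) \<longleftrightarrow> d\<phi> 0 = -2 * Psi \<alpha> (\<phi> 0)"
proof -
  have "energy \<alpha> \<phi> d\<phi> 0 = d\<phi> 0 + 2 * Psi \<alpha> (\<phi> 0)"
    using \<open>\<phi> 0 > 0\<close> by (simp add: energy_def signed_Psi_def)
  then have "energy \<alpha> \<phi> d\<phi> 0 = 0 \<longleftrightarrow> d\<phi> 0 = -2 * Psi \<alpha> (\<phi> 0)"
    by linarith
  moreover have "(\<exists>t0\<ge>0. \<phi> t0 = 0 \<and> d\<phi> t0 = 0) \<longleftrightarrow> energy \<alpha> \<phi> d\<phi> 0 = 0"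
    using stuck_imp_initial_energy_zero[OF \<open>is_solution \<alpha> \<phi> d\<phi>\<close> \<open>\<alpha> < 1\<close>]
      initial_energy_zero_imp_stuck[OF assms] by blast
  ultimately show ?thesis
    by simp
qed

end
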